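(* Let $A$ be a graded algebra and $G\le\mathrm{GrAut}\,A$ a subgroup. For every $r\ge1$, $A^{[r]}*G\cong(A*G)^{[r]}$ as graded algebras.
   Context: Graded algebras are $\mathbb{N}$-graded algebras over an algebraically closed field $k$. For a graded vector space $V$, $V^{(r)}=\bigoplus_{n\in\mathbb{Z}}V_{rn}$ with degree $n$ part $V_{rn}$, and $V(j)_m=V_{j+m}$. The $r$-th quasi-Veronese algebra $A^{[r]}$ is the $r\times r$ matrix algebra (indices $0,\dots,r-1$) whose $(i,j)$ entry is $A(j-i)^{(r)}$, with multiplication $(a_{ij})(b_{ij})=(\sum_{k=0}^{r-1}a_{kj}b_{ik})$. $G$ acts on $A^{[r]}$ entrywise: $g((a_{ij}))=(g(a_{ij}))$. The skew group algebra $B*G=B\otimes_kkG$ has multiplication $(a*g)(b*h)=ag(b)*gh$, graded by $B$. *)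

theory Defs
  imports "HOL-Algebra.Ring" "HOL-Library.FuncSet" "HOL-Computational_Algebra.Polynomial"
begin

text \<open>A k-algebra with an N-grading: a HOL-Algebra ring record extended by a
scalar multiplication by the field type 'k and the family of homogeneous
components grd n (n a natural number).\<close>

record ('k, 'a) gralg = "'a ring" +
  sm  :: "'k \<Rightarrow> 'a \<Rightarrow> 'a"
  grd :: "nat \<Rightarrow> 'a set"

definition alg_closed :: "'k::field itself \<Rightarrow> bool" where
  "alg_closed _ \<longleftrightarrow> (\<forall>p :: 'k poly. degree p \<noteq> 0 \<longrightarrow> (\<exists>x. poly p x = 0))"

definition k_algebra :: "('k::field, 'a) gralg \<Rightarrow> bool" where
  "k_algebra A \<longleftrightarrow> ring A
    \<and> (\<forall>c. \<forall>x\<in>carrier A. sm A c x \<in> carrier A)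
    \<and> (\<forall>x\<in>carrier A. sm A 1 x = x)
    \<and> (\<forall>c d. \<forall>x\<in>carrier A. sm A (c * d) x = sm A c (sm A d x))
    \<and> (\<forall>c d. \<forall>x\<in>carrier A. sm A (c + d) x = sm A c x \<oplus>\<^bsub>A\<^esub> sm A d x)
    \<and> (\<forall>c. \<forall>x\<in>carrier A. \<forall>y\<in>carrier A. sm A c (x \<oplus>\<^bsub>A\<^esub> y) = sm A c x \<oplus>\<^bsub>A\<^esub> sm A c y)
    \<and> (\<forall>c. \<forall>x\<in>carrier A. \<forall>y\<in>carrier A.
          sm A c (x \<otimes>\<^bsub>A\<^esub> y) = sm A c x \<otimes>\<^bsub>A\<^esub> y
        \<and> sm A c (x \<otimes>\<^bsub>A\<^esub> y) = x \<otimes>\<^bsub>A\<^esub> sm A c y)"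

definition graded_algebra :: "('k::field, 'a) gralg \<Rightarrow> bool" where
  "graded_algebra A \<longleftrightarrow> k_algebra A
    \<and> (\<forall>n. grd A n \<subseteq> carrier A \<and> \<zero>\<^bsub>A\<^esub> \<in> grd A n
         \<and> (\<forall>x\<in>grd A n. \<forall>y\<in>grd A n. x \<oplus>\<^bsub>A\<^esub> y \<in> grd A n)
         \<and> (\<forall>c. \<forall>x\<in>grd A n. sm A c x \<in> grd A n))
    \<and> (\<forall>m n. \<forall>x\<in>grd A m. \<forall>y\<in>grd A n. x \<otimes>\<^bsub>A\<^esub> y \<in> grd A (m + n))
    \<and> (\<forall>x\<in>carrier A. \<exists>!c. (\<forall>n. c n \<in> grd A n) \<and> finite {n. c n \<noteq> \<zero>\<^bsub>A\<^esub>}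
                          \<and> x = finsum A c {n. c n \<noteq> \<zero>\<^bsub>A\<^esub>})"

text \<open>Homogeneous components of an element (meaningful for graded algebras).\<close>
definition hcomp :: "('k, 'a) gralg \<Rightarrow> 'a \<Rightarrow> nat \<Rightarrow> 'a" where
  "hcomp A x = (THE c. (\<forall>n. c n \<in> grd A n) \<and> finite {n. c n \<noteq> \<zero>\<^bsub>A\<^esub>}
                      \<and> x = finsum A c {n. c n \<noteq> \<zero>\<^bsub>A\<^esub>})"

definition grdZ :: "('k, 'a) gralg \<Rightarrow> int \<Rightarrow> 'a set" where
  "grdZ A m = (if m < 0 then {\<zero>\<^bsub>A\<^esub>} else grd A (nat m))"

definition graded_hom :: "('k, 'a) gralg \<Rightarrow> ('k, 'b) gralg \<Rightarrow> ('a \<Rightarrow> 'b) \<Rightarrow> bool" where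
  "graded_hom A B f \<longleftrightarrow> f \<in> carrier A \<rightarrow> carrier B
    \<and> (\<forall>x\<in>carrier A. \<forall>y\<in>carrier A. f (x \<oplus>\<^bsub>A\<^esub> y) = f x \<oplus>\<^bsub>B\<^esub> f y)
    \<and> (\<forall>x\<in>carrier A. \<forall>y\<in>carrier A. f (x \<otimes>\<^bsub>A\<^esub> y) = f x \<otimes>\<^bsub>B\<^esub> f y)
    \<and> f \<one>\<^bsub>A\<^esub> = \<one>\<^bsub>B\<^esub>
    \<and> (\<forall>c. \<forall>x\<in>carrier A. f (sm A c x) = sm B c (f x))
    \<and> (\<forall>n. f ` grd A n \<subseteq> grd B n)"

definition graded_iso :: "('k, 'a) gralg \<Rightarrow> ('k, 'b) gralg \<Rightarrow> ('a \<Rightarrow> 'b) \<Rightarrow> bool" where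
  "graded_iso A B f \<longleftrightarrow> graded_hom A B f \<and> bij_betw f (carrier A) (carrier B)
    \<and> (\<forall>n. f ` grd A n = grd B n)"

definition GrAut :: "('k, 'a) gralg \<Rightarrow> ('a \<Rightarrow> 'a) monoid" where
  "GrAut A = \<lparr>carrier = {g. g \<in> extensional (carrier A) \<and> graded_iso A A g},
              monoid.mult = (\<lambda>g h. compose (carrier A) g h),
              monoid.one = (\<lambda>x\<in>carrier A. x)\<rparr>"

text \<open>A(d)^(r) = direct sum over n of A_(rn+d), as a subset of A.\<close>
definition ver_shift :: "('k, 'a) gralg \<Rightarrow> nat \<Rightarrow> int \<Rightarrow> 'a set" where
  "ver_shift A r d = {x \<in> carrier A. \<forall>m. hcomp A x m \<noteq> \<zero>\<^bsub>A\<^esub> \<longrightarrow> int m mod int r = d mod int r}"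

text \<open>The r-th quasi-Veronese algebra A^[r]: r x r matrices (indices 0..r-1,
entries outside set to zero) with (i,j) entry in A(j-i)^(r), product
(a_ij)(b_ij) = (sum_k a_kj b_ik), degree n part: (i,j) entry in A_(rn+j-i).\<close>
definition qver :: "('k, 'a) gralg \<Rightarrow> nat \<Rightarrow> ('k, nat \<Rightarrow> nat \<Rightarrow> 'a) gralg" where
  "qver A r = \<lparr>carrier = {M. (\<forall>i j. (i < r \<and> j < r \<longrightarrow> M i j \<in> ver_shift A r (int j - int i))
                                  \<and> (\<not> (i < r \<and> j < r) \<longrightarrow> M i j = \<zero>\<^bsub>A\<^esub>))},
     monoid.mult = (\<lambda>M N i j. if i < r \<and> j < r
                        then finsum A (\<lambda>k. M k j \<otimes>\<^bsub>A\<^esub> N i k) {..<r} else \<zero>\<^bsub>A\<^esub>),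
     monoid.one = (\<lambda>i j. if i = j \<and> i < r then \<one>\<^bsub>A\<^esub> else \<zero>\<^bsub>A\<^esub>),
     ring.zero = (\<lambda>i j. \<zero>\<^bsub>A\<^esub>),
     ring.add = (\<lambda>M N i j. M i j \<oplus>\<^bsub>A\<^esub> N i j),
     sm = (\<lambda>c M i j. sm A c (M i j)),
     grd = (\<lambda>n. {M. (\<forall>i j. (i < r \<and> j < r \<longrightarrow> M i j \<in> grdZ A (int r * int n + int j - int i))
                          \<and> (\<not> (i < r \<and> j < r) \<longrightarrow> M i j = \<zero>\<^bsub>A\<^esub>))})\<rparr>"

text \<open>Skew group algebra B * G = B \<otimes>_k kG for a group G acting on B via act:
finitely supported functions G \<rightarrow> B (f g = coefficient of g), with
(a*g)(b*h) = a g(b) * gh, graded by B.\<close>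
definition skew :: "('k, 'b) gralg \<Rightarrow> 'g monoid \<Rightarrow> ('g \<Rightarrow> 'b \<Rightarrow> 'b) \<Rightarrow> ('k, 'g \<Rightarrow> 'b) gralg" where
  "skew B G act = \<lparr>carrier = {f. (\<forall>g. f g \<in> carrier B) \<and> (\<forall>g. g \<notin> carrier G \<longrightarrow> f g = \<zero>\<^bsub>B\<^esub>)
                              \<and> finite {g. f g \<noteq> \<zero>\<^bsub>B\<^esub>}},
     monoid.mult = (\<lambda>f h x. if x \<in> carrier G
                      then finsum B (\<lambda>g. f g \<otimes>\<^bsub>B\<^esub> act g (h (inv\<^bsub>G\<^esub> g \<otimes>\<^bsub>G\<^esub> x)))
                                    {g \<in> carrier G. f g \<noteq> \<zero>\<^bsub>B\<^esub>}
                      else \<zero>\<^bsub>B\<^esub>),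
     monoid.one = (\<lambda>g. if g = \<one>\<^bsub>G\<^esub> then \<one>\<^bsub>B\<^esub> else \<zero>\<^bsub>B\<^esub>),
     ring.zero = (\<lambda>g. \<zero>\<^bsub>B\<^esub>),
     ring.add = (\<lambda>f h g. f g \<oplus>\<^bsub>B\<^esub> h g),
     sm = (\<lambda>c f g. sm B c (f g)),
     grd = (\<lambda>n. {f. (\<forall>g. f g \<in> grd B n) \<and> (\<forall>g. g \<notin> carrier G \<longrightarrow> f g = \<zero>\<^bsub>B\<^esub>)
                      \<and> finite {g. f g \<noteq> \<zero>\<^bsub>B\<^esub>}})\<rparr>"

end

(*
  An element of A^[r] * G is a finitely supported function from G to r x r matrices over A, and an
  element of (A * G)^[r] is an r x r matrix of finitely supported functions from G to A; the
  isomorphism just exchanges the group index with the two matrix indices. It respects the entry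
  conditions and the gradings because homogeneous components in A * G are taken coefficientwise, so
  an element of A * G lies in (A * G)(d)^(r) exactly when all its coefficients lie in A(d)^(r); that
  G acts on A^[r] at all rests on graded automorphisms preserving every A(d)^(r). It is
  multiplicative because both products, evaluated at a group element x and a position (i, j), are
  the double sum over g in G and k < r of M_g(k, j) * g(N_(g^-1 x)(i, k)), summed in the two orders.
*)
theory Submission
  imports Defs
begin

lemma finsum_additive:
  assumes S: "abelian_monoid S" and T: "abelian_monoid T" and "finite I"
    and "F \<in> I \<rightarrow> carrier S"
    and closed: "\<And>x. x \<in> carrier S \<Longrightarrow> e x \<in> carrier T"
    and add: "\<And>x y. x \<in> carrier S \<Longrightarrow> y \<in> carrier S \<Longrightarrow> e (x \<oplus>\<^bsub>S\<^esub> y) = e x \<oplus>\<^bsub>T\<^esub> e y"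
    and zero: "e \<zero>\<^bsub>S\<^esub> = \<zero>\<^bsub>T\<^esub>"
  shows "e (finsum S F I) = finsum T (\<lambda>i. e (F i)) I"
  using \<open>finite I\<close> \<open>F \<in> I \<rightarrow> carrier S\<close>
proof (induction I rule: finite_induct)
  case empty
  then show ?case by (simp add: abelian_monoid.finsum_empty[OF S] abelian_monoid.finsum_empty[OF T] zero)
next
  case (insert a I)
  then have "finsum S F (insert a I) = F a \<oplus>\<^bsub>S\<^esub> finsum S F I"
    and "finsum T (\<lambda>i. e (F i)) (insert a I) = e (F a) \<oplus>\<^bsub>T\<^esub> finsum T (\<lambda>i. e (F i)) I"
    and "finsum S F I \<in> carrier S"
    by (auto intro!: abelian_monoid.finsum_insert[OF S] abelian_monoid.finsum_insert[OF T]
                     abelian_monoid.finsum_closed[OF S] closed)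
  with insert add show ?case by auto
qed

lemma (in abelian_monoid) finsum_swap:
  assumes "finite I" "finite J" and F: "\<And>i j. i \<in> I \<Longrightarrow> j \<in> J \<Longrightarrow> F i j \<in> carrier G"
  shows "finsum G (\<lambda>i. finsum G (\<lambda>j. F i j) J) I = finsum G (\<lambda>j. finsum G (\<lambda>i. F i j) I) J"
  using \<open>finite I\<close> F
proof (induction I rule: finite_induct)
  case empty
  then show ?case by simp
next
  case (insert a I)
  then have "finsum G (\<lambda>i. finsum G (\<lambda>j. F i j) J) (insert a I)
      = finsum G (\<lambda>j. F a j) J \<oplus> finsum G (\<lambda>j. finsum G (\<lambda>i. F i j) I) J"
    by (simp add: finsum_insert Pi_def)
  also have "\<dots> = finsum G (\<lambda>j. F a j \<oplus> finsum G (\<lambda>i. F i j) I) J"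
    using insert by (simp add: finsum_addf Pi_def)
  also have "\<dots> = finsum G (\<lambda>j. finsum G (\<lambda>i. F i j) (insert a I)) J"
    using insert by (intro finsum_cong') (auto simp: finsum_insert Pi_def)
  finally show ?case .
qed

lemma (in abelian_monoid) finsum_support_superset:
  assumes "finite T" "{n. c n \<noteq> \<zero>} \<subseteq> T" "\<And>n. c n \<in> carrier G"
  shows "finsum G c {n. c n \<noteq> \<zero>} = finsum G c T"
  by (rule add.finprod_mono_neutral_cong_left) (use assms in auto)

lemma graded_algebra_ring: "graded_algebra A \<Longrightarrow> ring A"
  unfolding graded_algebra_def k_algebra_def by blast

lemma graded_algebra_abelian_monoid: "graded_algebra A \<Longrightarrow> abelian_monoid A"
  using graded_algebra_ring ring.is_abelian_group abelian_group_def by blast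

lemma graded_hom_closed: "graded_hom A B g \<Longrightarrow> x \<in> carrier A \<Longrightarrow> g x \<in> carrier B"
  unfolding graded_hom_def by blast

lemma graded_hom_add:
  "graded_hom A B g \<Longrightarrow> x \<in> carrier A \<Longrightarrow> y \<in> carrier A \<Longrightarrow> g (x \<oplus>\<^bsub>A\<^esub> y) = g x \<oplus>\<^bsub>B\<^esub> g y"
  unfolding graded_hom_def by blast

lemma graded_hom_mult:
  "graded_hom A B g \<Longrightarrow> x \<in> carrier A \<Longrightarrow> y \<in> carrier A \<Longrightarrow> g (x \<otimes>\<^bsub>A\<^esub> y) = g x \<otimes>\<^bsub>B\<^esub> g y"
  unfolding graded_hom_def by blast

lemma graded_hom_one: "graded_hom A B g \<Longrightarrow> g \<one>\<^bsub>A\<^esub> = \<one>\<^bsub>B\<^esub>"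
  unfolding graded_hom_def by blast

lemma graded_hom_sm: "graded_hom A B g \<Longrightarrow> x \<in> carrier A \<Longrightarrow> g (sm A c x) = sm B c (g x)"
  unfolding graded_hom_def by blast

lemma graded_hom_grd: "graded_hom A B g \<Longrightarrow> x \<in> grd A n \<Longrightarrow> g x \<in> grd B n"
  unfolding graded_hom_def by blast

lemma graded_hom_zero:
  assumes g: "graded_hom A B g" and "ring A" "ring B"
  shows "g \<zero>\<^bsub>A\<^esub> = \<zero>\<^bsub>B\<^esub>"
proof -
  interpret A: ring A by fact
  interpret B: ring B by fact
  have "g \<zero>\<^bsub>A\<^esub> \<in> carrier B" "g \<zero>\<^bsub>A\<^esub> = g \<zero>\<^bsub>A\<^esub> \<oplus>\<^bsub>B\<^esub> g \<zero>\<^bsub>A\<^esub>"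
    using g unfolding graded_hom_def by (metis A.zero_closed PiE, metis A.zero_closed A.l_zero)
  then show ?thesis by simp
qed

lemma graded_isoD:
  assumes "graded_iso A B g"
  shows "graded_hom A B g" "bij_betw g (carrier A) (carrier B)" "g ` grd A n = grd B n"
  using assms unfolding graded_iso_def by blast+

section \<open>Homogeneous decompositions and quasi-Veronese components\<close>

definition hdecomp :: "('k, 'a) gralg \<Rightarrow> 'a \<Rightarrow> (nat \<Rightarrow> 'a) \<Rightarrow> bool" where
  "hdecomp S x c \<longleftrightarrow> (\<forall>n. c n \<in> grd S n) \<and> finite {n. c n \<noteq> \<zero>\<^bsub>S\<^esub>}
                       \<and> x = finsum S c {n. c n \<noteq> \<zero>\<^bsub>S\<^esub>}"

lemma hcomp_hdecomp:
  assumes "\<exists>!c. hdecomp S x c"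
  shows "hdecomp S x (hcomp S x)"
proof -
  have "hcomp S x = (THE c. hdecomp S x c)" by (simp add: hcomp_def hdecomp_def)
  with theI'[OF assms] show ?thesis by simp
qed

lemma hcomp_eqI: "\<exists>!c. hdecomp S x c \<Longrightarrow> hdecomp S x c \<Longrightarrow> hcomp S x = c"
  by (metis hcomp_hdecomp)

lemma hdecomp_iff_superset:
  assumes "abelian_monoid S" and grd: "\<And>n. grd S n \<subseteq> carrier S" and c: "\<And>n. c n \<in> grd S n"
    and "finite T" "{n. c n \<noteq> \<zero>\<^bsub>S\<^esub>} \<subseteq> T"
  shows "hdecomp S x c \<longleftrightarrow> x = finsum S c T"
proof -
  have "finsum S c {n. c n \<noteq> \<zero>\<^bsub>S\<^esub>} = finsum S c T"
    by (rule abelian_monoid.finsum_support_superset) (use assms in blast)+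
  moreover have "finite {n. c n \<noteq> \<zero>\<^bsub>S\<^esub>}" using assms(4,5) by (rule finite_subset[rotated])
  ultimately show ?thesis unfolding hdecomp_def using c by simp
qed

lemma graded_algebra_hdecomp_ex1: "graded_algebra A \<Longrightarrow> x \<in> carrier A \<Longrightarrow> \<exists>!c. hdecomp A x c"
  unfolding graded_algebra_def hdecomp_def by blast

lemma ver_shift_carrier: "x \<in> ver_shift A r d \<Longrightarrow> x \<in> carrier A"
  unfolding ver_shift_def by simp

context
  fixes A :: "('k::field, 'a) gralg"
  assumes graded: "graded_algebra A"
begin

interpretation ring A by (rule graded_algebra_ring[OF graded])

lemma grd_subset_carrier: "grd A n \<subseteq> carrier A"
  using graded unfolding graded_algebra_def by blast

lemma zero_in_grd: "\<zero>\<^bsub>A\<^esub> \<in> grd A n"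
  using graded unfolding graded_algebra_def by blast

lemma grd_add_closed: "x \<in> grd A n \<Longrightarrow> y \<in> grd A n \<Longrightarrow> x \<oplus>\<^bsub>A\<^esub> y \<in> grd A n"
  using graded unfolding graded_algebra_def by blast

lemma grd_mult_closed: "x \<in> grd A m \<Longrightarrow> y \<in> grd A n \<Longrightarrow> x \<otimes>\<^bsub>A\<^esub> y \<in> grd A (m + n)"
  using graded unfolding graded_algebra_def by blast

lemma sm_closed: "x \<in> carrier A \<Longrightarrow> sm A c x \<in> carrier A"
  using graded unfolding graded_algebra_def k_algebra_def by auto

lemma hdecomp_iff_finsum:
  assumes "\<And>n. c n \<in> grd A n" "finite T" "{n. c n \<noteq> \<zero>\<^bsub>A\<^esub>} \<subseteq> T"
  shows "hdecomp A x c \<longleftrightarrow> x = finsum A c T"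
  using hdecomp_iff_superset[OF graded_algebra_abelian_monoid[OF graded] grd_subset_carrier] assms by blast

lemma ver_shift_iff:
  "x \<in> ver_shift A r d \<longleftrightarrow> x \<in> carrier A \<and>
     (\<exists>c. hdecomp A x c \<and> (\<forall>m. c m \<noteq> \<zero>\<^bsub>A\<^esub> \<longrightarrow> int m mod int r = d mod int r))"
  using hcomp_hdecomp hcomp_eqI graded_algebra_hdecomp_ex1[OF graded]
  unfolding ver_shift_def by (smt (verit) mem_Collect_eq)

lemma zero_in_ver_shift: "\<zero>\<^bsub>A\<^esub> \<in> ver_shift A r d"
proof -
  have "hdecomp A \<zero>\<^bsub>A\<^esub> (\<lambda>_. \<zero>\<^bsub>A\<^esub>)"
    by (subst hdecomp_iff_finsum[where T = "{}"]) (auto simp: zero_in_grd)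
  then show ?thesis unfolding ver_shift_iff by auto
qed

lemma homogeneous_in_ver_shift:
  assumes x: "x \<in> grd A n" and "int n mod int r = d mod int r"
  shows "x \<in> ver_shift A r d"
proof -
  define c where "c = (\<lambda>m. if m = n then x else \<zero>\<^bsub>A\<^esub>)"
  have "x \<in> carrier A" using x grd_subset_carrier by blast
  then have "hdecomp A x c"
    by (subst hdecomp_iff_finsum[where T = "{n}"]) (auto simp: c_def x zero_in_grd)
  with assms \<open>x \<in> carrier A\<close> show ?thesis
    unfolding ver_shift_iff by (intro conjI exI[of _ c]) (auto simp: c_def)
qed

lemma ver_shift_add:
  assumes "x \<in> ver_shift A r d" "y \<in> ver_shift A r d"
  shows "x \<oplus>\<^bsub>A\<^esub> y \<in> ver_shift A r d"
proof -
  obtain c where c: "hdecomp A x c" and cm: "\<forall>m. c m \<noteq> \<zero>\<^bsub>A\<^esub> \<longrightarrow> int m mod int r = d mod int r"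
    using assms(1) ver_shift_iff by blast
  obtain e where e: "hdecomp A y e" and em: "\<forall>m. e m \<noteq> \<zero>\<^bsub>A\<^esub> \<longrightarrow> int m mod int r = d mod int r"
    using assms(2) ver_shift_iff by blast
  define T where "T = {n. c n \<noteq> \<zero>\<^bsub>A\<^esub>} \<union> {n. e n \<noteq> \<zero>\<^bsub>A\<^esub>}"
  have cg: "\<And>n. c n \<in> grd A n" and eg: "\<And>n. e n \<in> grd A n" and "finite T"
    using c e unfolding hdecomp_def T_def by auto
  then have cc: "\<And>n. c n \<in> carrier A" and ec: "\<And>n. e n \<in> carrier A"
    using grd_subset_carrier by blast+
  have "x = finsum A c T" "y = finsum A e T"
    using c e hdecomp_iff_finsum[OF cg \<open>finite T\<close>] hdecomp_iff_finsum[OF eg \<open>finite T\<close>]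
    unfolding T_def by auto
  then have "hdecomp A (x \<oplus>\<^bsub>A\<^esub> y) (\<lambda>n. c n \<oplus>\<^bsub>A\<^esub> e n)"
    using cc ec cg eg \<open>finite T\<close>
    by (subst hdecomp_iff_finsum[where T = T]) (auto simp: T_def finsum_addf Pi_def grd_add_closed)
  moreover have "\<forall>m. c m \<oplus>\<^bsub>A\<^esub> e m \<noteq> \<zero>\<^bsub>A\<^esub> \<longrightarrow> int m mod int r = d mod int r"
    using cm em by (metis l_zero zero_closed)
  ultimately show ?thesis
    using assms ver_shift_carrier unfolding ver_shift_iff by blast
qed

lemma ver_shift_finsum:
  assumes "finite I" "\<And>i. i \<in> I \<Longrightarrow> F i \<in> ver_shift A r d"
  shows "finsum A F I \<in> ver_shift A r d"
  using assms
proof (induction I rule: finite_induct)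
  case empty
  then show ?case using zero_in_ver_shift by simp
next
  case (insert a I)
  have "F a \<in> carrier A" "F \<in> I \<rightarrow> carrier A"
    using insert.prems by (auto intro: ver_shift_carrier)
  then have "finsum A F (insert a I) = F a \<oplus>\<^bsub>A\<^esub> finsum A F I"
    using insert.hyps by simp
  also have "\<dots> \<in> ver_shift A r d"
    using insert by (intro ver_shift_add) auto
  finally show ?case .
qed

lemma ver_shift_mult:
  assumes x: "x \<in> ver_shift A r d1" and y: "y \<in> ver_shift A r d2"
  shows "x \<otimes>\<^bsub>A\<^esub> y \<in> ver_shift A r (d1 + d2)"
proof -
  obtain c where c: "hdecomp A x c" and cm: "\<forall>m. c m \<noteq> \<zero>\<^bsub>A\<^esub> \<longrightarrow> int m mod int r = d1 mod int r"
    using x ver_shift_iff by blast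
  obtain e where e: "hdecomp A y e" and em: "\<forall>m. e m \<noteq> \<zero>\<^bsub>A\<^esub> \<longrightarrow> int m mod int r = d2 mod int r"
    using y ver_shift_iff by blast
  define Sc where "Sc = {n. c n \<noteq> \<zero>\<^bsub>A\<^esub>}"
  define Se where "Se = {n. e n \<noteq> \<zero>\<^bsub>A\<^esub>}"
  have "finite Sc" "finite Se" "x = finsum A c Sc" "y = finsum A e Se"
    and cg: "\<And>n. c n \<in> grd A n" and eg: "\<And>n. e n \<in> grd A n"
    using c e unfolding hdecomp_def Sc_def Se_def by auto
  moreover have "\<And>n. c n \<in> carrier A" "\<And>n. e n \<in> carrier A"
    using cg eg grd_subset_carrier by blast+
  ultimately have "x \<otimes>\<^bsub>A\<^esub> y = finsum A (\<lambda>n. c n \<otimes>\<^bsub>A\<^esub> finsum A e Se) Sc"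
    by (simp add: finsum_ldistr Pi_def)
  also have "\<dots> = finsum A (\<lambda>n. finsum A (\<lambda>m. c n \<otimes>\<^bsub>A\<^esub> e m) Se) Sc"
  proof (rule finsum_cong')
    fix n
    show "c n \<otimes>\<^bsub>A\<^esub> finsum A e Se = finsum A (\<lambda>m. c n \<otimes>\<^bsub>A\<^esub> e m) Se"
      using \<open>finite Se\<close> \<open>\<And>n. c n \<in> carrier A\<close> \<open>\<And>n. e n \<in> carrier A\<close>
      by (intro finsum_rdistr) auto
  qed (use \<open>\<And>n. c n \<in> carrier A\<close> \<open>\<And>n. e n \<in> carrier A\<close> in auto)
  also have "\<dots> \<in> ver_shift A r (d1 + d2)"
  proof (intro ver_shift_finsum \<open>finite Sc\<close> \<open>finite Se\<close>)
    fix n m assume "n \<in> Sc" "m \<in> Se"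
    then have "(int n + int m) mod int r = (d1 + d2) mod int r"
      using cm em unfolding Sc_def Se_def by (auto intro: mod_add_cong)
    then show "c n \<otimes>\<^bsub>A\<^esub> e m \<in> ver_shift A r (d1 + d2)"
      by (intro homogeneous_in_ver_shift[OF grd_mult_closed[OF cg eg]]) simp
  qed
  finally show ?thesis .
qed

lemma ver_shift_graded_endo:
  assumes g: "graded_hom A A g" and x: "x \<in> ver_shift A r d"
  shows "g x \<in> ver_shift A r d"
proof -
  obtain c where c: "hdecomp A x c" and cm: "\<forall>m. c m \<noteq> \<zero>\<^bsub>A\<^esub> \<longrightarrow> int m mod int r = d mod int r"
    using x ver_shift_iff by blast
  define Sc where "Sc = {n. c n \<noteq> \<zero>\<^bsub>A\<^esub>}"
  have "finite Sc" "x = finsum A c Sc" and cg: "\<And>n. c n \<in> grd A n"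
    using c unfolding hdecomp_def Sc_def by auto
  have g0: "g \<zero>\<^bsub>A\<^esub> = \<zero>\<^bsub>A\<^esub>"
    using graded_hom_zero[OF g] graded_algebra_ring[OF graded] by blast
  have "g x = finsum A (\<lambda>n. g (c n)) Sc"
    using g cg grd_subset_carrier \<open>finite Sc\<close> \<open>x = finsum A c Sc\<close>
    by (auto intro!: finsum_additive[OF graded_algebra_abelian_monoid[OF graded]
                                        graded_algebra_abelian_monoid[OF graded]]
             simp: graded_hom_def g0)
  moreover have "\<And>n. g (c n) \<in> grd A n" using g cg unfolding graded_hom_def by blast
  ultimately have "hdecomp A (g x) (\<lambda>n. g (c n))"
    using \<open>finite Sc\<close> g0 by (subst hdecomp_iff_finsum[where T = Sc]) (auto simp: Sc_def)
  moreover have "g x \<in> carrier A" using g ver_shift_carrier[OF x] unfolding graded_hom_def by blast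
  ultimately show ?thesis using cm g0 unfolding ver_shift_iff by metis
qed

end

lemma hcomp_zero:
  assumes A: "graded_algebra A"
  shows "hcomp A \<zero>\<^bsub>A\<^esub> = (\<lambda>_. \<zero>\<^bsub>A\<^esub>)"
proof (rule hcomp_eqI)
  show "\<exists>!c. hdecomp A \<zero>\<^bsub>A\<^esub> c"
    using graded_algebra_hdecomp_ex1[OF A] ring.ring_simprules(2)[OF graded_algebra_ring[OF A]] by blast
  show "hdecomp A \<zero>\<^bsub>A\<^esub> (\<lambda>_. \<zero>\<^bsub>A\<^esub>)"
    by (subst hdecomp_iff_finsum[OF A, where T = "{}"])
       (simp_all add: zero_in_grd[OF A] abelian_monoid.finsum_empty[OF graded_algebra_abelian_monoid[OF A]])
qed

section \<open>Graded automorphisms\<close>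

lemma graded_hom_compose:
  assumes A: "graded_algebra A" and hh: "graded_hom A B h" and gh: "graded_hom B C g"
  shows "graded_hom A C (compose (carrier A) g h)"
proof -
  interpret ring A by (rule graded_algebra_ring[OF A])
  have comp: "\<And>x. x \<in> carrier A \<Longrightarrow> compose (carrier A) g h x = g (h x)"
    by (simp add: compose_eq)
  show ?thesis
    unfolding graded_hom_def
  proof (intro conjI ballI allI)
    show "compose (carrier A) g h \<in> carrier A \<rightarrow> carrier C"
      using graded_hom_closed[OF gh] graded_hom_closed[OF hh] comp by simp
    show "compose (carrier A) g h \<one>\<^bsub>A\<^esub> = \<one>\<^bsub>C\<^esub>"
      by (simp add: comp graded_hom_one[OF hh] graded_hom_one[OF gh])
    fix x y assume "x \<in> carrier A" "y \<in> carrier A"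
    then show "compose (carrier A) g h (x \<oplus>\<^bsub>A\<^esub> y)
        = compose (carrier A) g h x \<oplus>\<^bsub>C\<^esub> compose (carrier A) g h y"
      and "compose (carrier A) g h (x \<otimes>\<^bsub>A\<^esub> y)
        = compose (carrier A) g h x \<otimes>\<^bsub>C\<^esub> compose (carrier A) g h y"
      by (simp_all add: comp graded_hom_add[OF hh] graded_hom_add[OF gh] graded_hom_closed[OF hh]
                        graded_hom_mult[OF hh] graded_hom_mult[OF gh])
  next
    fix c x assume "x \<in> carrier A"
    then show "compose (carrier A) g h (sm A c x) = sm C c (compose (carrier A) g h x)"
      by (simp add: comp sm_closed[OF A] graded_hom_sm[OF hh] graded_hom_sm[OF gh] graded_hom_closed[OF hh])
  next
    fix n
    show "compose (carrier A) g h ` grd A n \<subseteq> grd C n"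
    proof (rule image_subsetI)
      fix x assume "x \<in> grd A n"
      moreover have "x \<in> carrier A" using grd_subset_carrier[OF A] \<open>x \<in> grd A n\<close> ..
      ultimately show "compose (carrier A) g h x \<in> grd C n"
        by (simp add: comp graded_hom_grd[OF gh] graded_hom_grd[OF hh])
    qed
  qed
qed

lemma graded_iso_compose:
  assumes A: "graded_algebra A" and h: "graded_iso A B h" and g: "graded_iso B C g"
  shows "graded_iso A C (compose (carrier A) g h)"
proof -
  have comp: "\<And>x. x \<in> carrier A \<Longrightarrow> compose (carrier A) g h x = g (h x)"
    by (simp add: compose_eq)
  have "bij_betw (g \<circ> h) (carrier A) (carrier C)"
    by (rule bij_betw_trans[OF graded_isoD(2)[OF h] graded_isoD(2)[OF g]])
  then have "bij_betw (compose (carrier A) g h) (carrier A) (carrier C)"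
    by (rule bij_betw_cong[THEN iffD1, rotated]) (simp add: comp)
  moreover have "compose (carrier A) g h ` grd A n = grd C n" for n
  proof -
    have "compose (carrier A) g h ` grd A n = (g \<circ> h) ` grd A n"
      using grd_subset_carrier[OF A, of n] by (intro image_cong) (auto simp: comp subset_iff)
    also have "\<dots> = grd C n"
      by (simp only: image_comp[symmetric] graded_isoD(3)[OF g] graded_isoD(3)[OF h])
    finally show ?thesis .
  qed
  ultimately show ?thesis
    using graded_hom_compose[OF A graded_isoD(1)[OF h] graded_isoD(1)[OF g]]
    unfolding graded_iso_def by blast
qed

lemma graded_iso_id:
  assumes A: "graded_algebra A"
  shows "graded_iso A A (\<lambda>x\<in>carrier A. x)"
proof -
  interpret ring A by (rule graded_algebra_ring[OF A])
  have grd: "(\<lambda>x\<in>carrier A. x) ` grd A n = grd A n" for n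
  proof -
    have "(\<lambda>x\<in>carrier A. x) ` grd A n = (\<lambda>x. x) ` grd A n"
      using grd_subset_carrier[OF A, of n] by (intro image_cong) (auto simp: subset_iff)
    then show ?thesis by simp
  qed
  have "graded_hom A A (\<lambda>x\<in>carrier A. x)"
    unfolding graded_hom_def using grd sm_closed[OF A] by simp
  moreover have "bij_betw (\<lambda>x\<in>carrier A. x) (carrier A) (carrier A)"
    by (simp add: bij_betw_def inj_on_def)
  ultimately show ?thesis unfolding graded_iso_def using grd by blast
qed

lemma graded_iso_inv:
  assumes A: "graded_algebra A" and B: "graded_algebra B" and g: "graded_iso A B g"
  shows "graded_iso B A (\<lambda>y\<in>carrier B. inv_into (carrier A) g y)"
proof -
  interpret A: ring A by (rule graded_algebra_ring[OF A])
  interpret B: ring B by (rule graded_algebra_ring[OF B])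
  let ?y = "\<lambda>y\<in>carrier B. inv_into (carrier A) g y"
  note gh = graded_isoD(1)[OF g] and bij = graded_isoD(2)[OF g]
  have bij_y: "bij_betw ?y (carrier B) (carrier A)"
    using bij_betw_inv_into[OF bij] by simp
  then have yA: "\<And>b. b \<in> carrier B \<Longrightarrow> ?y b \<in> carrier A"
    by (metis bij_betwE)
  have right: "\<And>b. b \<in> carrier B \<Longrightarrow> g (?y b) = b"
    using bij_betw_inv_into_right[OF bij] by simp
  have inv_eqI: "?y b = a" if "a \<in> carrier A" "g a = b" for a b
    using that bij_betw_inv_into_left[OF bij] graded_hom_closed[OF gh] by auto
  have grd: "?y ` grd B n = grd A n" for n
  proof -
    have "?y ` grd B n = ?y ` g ` grd A n" by (simp add: graded_isoD(3)[OF g])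
    also have "\<dots> = (\<lambda>a. a) ` grd A n"
      unfolding image_image
      using grd_subset_carrier[OF A, of n] inv_eqI by (intro image_cong) (auto simp del: restrict_apply)
    also have "\<dots> = grd A n" by simp
    finally show ?thesis .
  qed
  have "graded_hom B A ?y"
    unfolding graded_hom_def
  proof (intro conjI ballI allI)
    show "?y \<in> carrier B \<rightarrow> carrier A" by (intro funcsetI yA)
    fix x y assume "x \<in> carrier B" "y \<in> carrier B"
    then show "?y (x \<oplus>\<^bsub>B\<^esub> y) = ?y x \<oplus>\<^bsub>A\<^esub> ?y y" "?y (x \<otimes>\<^bsub>B\<^esub> y) = ?y x \<otimes>\<^bsub>A\<^esub> ?y y"
      by (intro inv_eqI; simp add: yA right graded_hom_add[OF gh] graded_hom_mult[OF gh] del: restrict_apply)+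
  next
    show "?y \<one>\<^bsub>B\<^esub> = \<one>\<^bsub>A\<^esub>" by (rule inv_eqI) (simp_all add: graded_hom_one[OF gh])
  next
    fix c x assume "x \<in> carrier B"
    then show "?y (sm B c x) = sm A c (?y x)"
      by (intro inv_eqI) (simp_all add: sm_closed[OF A] yA right graded_hom_sm[OF gh] del: restrict_apply)
  next
    fix n show "?y ` grd B n \<subseteq> grd A n" by (simp only: grd subset_refl)
  qed
  with bij_y grd show ?thesis unfolding graded_iso_def by blast
qed

lemma GrAut_carrier_iso: "g \<in> carrier (GrAut A) \<Longrightarrow> graded_iso A A g"
  unfolding GrAut_def by simp

lemma GrAut_funcset: "g \<in> carrier (GrAut A) \<Longrightarrow> g \<in> carrier A \<rightarrow> carrier A"
  using graded_hom_closed[OF graded_isoD(1)[OF GrAut_carrier_iso]] by (intro funcsetI)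

lemma group_GrAut:
  assumes A: "graded_algebra A"
  shows "group (GrAut A)"
proof (rule groupI)
  show "\<one>\<^bsub>GrAut A\<^esub> \<in> carrier (GrAut A)"
    using graded_iso_id[OF A] by (simp add: GrAut_def)
  fix g h assume g: "g \<in> carrier (GrAut A)" and h: "h \<in> carrier (GrAut A)"
  show "g \<otimes>\<^bsub>GrAut A\<^esub> h \<in> carrier (GrAut A)"
    using graded_iso_compose[OF A GrAut_carrier_iso[OF h] GrAut_carrier_iso[OF g]]
    by (simp add: GrAut_def compose_extensional)
  fix k assume "k \<in> carrier (GrAut A)"
  then show "g \<otimes>\<^bsub>GrAut A\<^esub> h \<otimes>\<^bsub>GrAut A\<^esub> k = g \<otimes>\<^bsub>GrAut A\<^esub> (h \<otimes>\<^bsub>GrAut A\<^esub> k)"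
    using compose_assoc[OF GrAut_funcset, symmetric] by (simp add: GrAut_def)
next
  fix g assume g: "g \<in> carrier (GrAut A)"
  have "g \<in> extensional (carrier A)" using g by (simp add: GrAut_def)
  then show "\<one>\<^bsub>GrAut A\<^esub> \<otimes>\<^bsub>GrAut A\<^esub> g = g"
    using GrAut_funcset[OF g] by (simp add: GrAut_def compose_def extensional_def fun_eq_iff Pi_iff)
  have "bij_betw g (carrier A) (carrier A)"
    by (rule graded_isoD(2)[OF GrAut_carrier_iso[OF g]])
  then have "(\<lambda>y\<in>carrier A. inv_into (carrier A) g y) \<otimes>\<^bsub>GrAut A\<^esub> g = \<one>\<^bsub>GrAut A\<^esub>"
    by (simp add: GrAut_def compose_inv_into_id)
  moreover have "(\<lambda>y\<in>carrier A. inv_into (carrier A) g y) \<in> carrier (GrAut A)"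
    using graded_iso_inv[OF A A GrAut_carrier_iso[OF g]] by (simp add: GrAut_def)
  ultimately show "\<exists>h\<in>carrier (GrAut A). h \<otimes>\<^bsub>GrAut A\<^esub> g = \<one>\<^bsub>GrAut A\<^esub>" by blast
qed

section \<open>Skew group algebras and quasi-Veronese algebras\<close>

lemma skew_simps:
  "carrier (skew B G act) = {f. (\<forall>g. f g \<in> carrier B) \<and> (\<forall>g. g \<notin> carrier G \<longrightarrow> f g = \<zero>\<^bsub>B\<^esub>)
                              \<and> finite {g. f g \<noteq> \<zero>\<^bsub>B\<^esub>}}"
  "x \<oplus>\<^bsub>skew B G act\<^esub> y = (\<lambda>g. x g \<oplus>\<^bsub>B\<^esub> y g)"
  "\<zero>\<^bsub>skew B G act\<^esub> = (\<lambda>g. \<zero>\<^bsub>B\<^esub>)"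
  "\<one>\<^bsub>skew B G act\<^esub> = (\<lambda>g. if g = \<one>\<^bsub>G\<^esub> then \<one>\<^bsub>B\<^esub> else \<zero>\<^bsub>B\<^esub>)"
  "x \<otimes>\<^bsub>skew B G act\<^esub> y = (\<lambda>z. if z \<in> carrier G
                      then finsum B (\<lambda>g. x g \<otimes>\<^bsub>B\<^esub> act g (y (inv\<^bsub>G\<^esub> g \<otimes>\<^bsub>G\<^esub> z)))
                                    {g \<in> carrier G. x g \<noteq> \<zero>\<^bsub>B\<^esub>}
                      else \<zero>\<^bsub>B\<^esub>)"
  "sm (skew B G act) c x = (\<lambda>g. sm B c (x g))"
  "grd (skew B G act) n = {f. (\<forall>g. f g \<in> grd B n) \<and> (\<forall>g. g \<notin> carrier G \<longrightarrow> f g = \<zero>\<^bsub>B\<^esub>)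
                      \<and> finite {g. f g \<noteq> \<zero>\<^bsub>B\<^esub>}}"
  by (simp_all add: skew_def)

lemma qver_simps:
  "carrier (qver A r) = {M. (\<forall>i j. (i < r \<and> j < r \<longrightarrow> M i j \<in> ver_shift A r (int j - int i))
                                  \<and> (\<not> (i < r \<and> j < r) \<longrightarrow> M i j = \<zero>\<^bsub>A\<^esub>))}"
  "M \<otimes>\<^bsub>qver A r\<^esub> N = (\<lambda>i j. if i < r \<and> j < r
                        then finsum A (\<lambda>k. M k j \<otimes>\<^bsub>A\<^esub> N i k) {..<r} else \<zero>\<^bsub>A\<^esub>)"
  "\<one>\<^bsub>qver A r\<^esub> = (\<lambda>i j. if i = j \<and> i < r then \<one>\<^bsub>A\<^esub> else \<zero>\<^bsub>A\<^esub>)"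
  "\<zero>\<^bsub>qver A r\<^esub> = (\<lambda>i j. \<zero>\<^bsub>A\<^esub>)"
  "M \<oplus>\<^bsub>qver A r\<^esub> N = (\<lambda>i j. M i j \<oplus>\<^bsub>A\<^esub> N i j)"
  "sm (qver A r) c M = (\<lambda>i j. sm A c (M i j))"
  "grd (qver A r) n = {M. (\<forall>i j. (i < r \<and> j < r \<longrightarrow> M i j \<in> grdZ A (int r * int n + int j - int i))
                          \<and> (\<not> (i < r \<and> j < r) \<longrightarrow> M i j = \<zero>\<^bsub>A\<^esub>))}"
  by (simp_all add: qver_def)

lemma qver_entry_closed:
  assumes "graded_algebra A" "M \<in> carrier (qver A r)"
  shows "M i j \<in> carrier A"
proof (cases "i < r \<and> j < r")
  case True
  then show ?thesis using assms(2) by (auto simp: qver_simps intro: ver_shift_carrier)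
next
  case False
  then show ?thesis
    using assms ring.ring_simprules(2)[OF graded_algebra_ring] by (simp add: qver_simps)
qed

lemma abelian_monoid_skew:
  assumes B: "abelian_monoid B"
  shows "abelian_monoid (skew B G act)"
proof (rule abelian_monoidI)
  interpret abelian_monoid B by (rule B)
  fix x y assume "x \<in> carrier (skew B G act)" "y \<in> carrier (skew B G act)"
  moreover have "{g. x g \<oplus>\<^bsub>B\<^esub> y g \<noteq> \<zero>\<^bsub>B\<^esub>} \<subseteq> {g. x g \<noteq> \<zero>\<^bsub>B\<^esub>} \<union> {g. y g \<noteq> \<zero>\<^bsub>B\<^esub>}"
    by auto
  ultimately show "x \<oplus>\<^bsub>skew B G act\<^esub> y \<in> carrier (skew B G act)"
    by (auto simp: skew_simps elim: finite_subset)
  fix z assume "z \<in> carrier (skew B G act)"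
  with \<open>x \<in> carrier (skew B G act)\<close> \<open>y \<in> carrier (skew B G act)\<close>
  show "x \<oplus>\<^bsub>skew B G act\<^esub> y \<oplus>\<^bsub>skew B G act\<^esub> z = x \<oplus>\<^bsub>skew B G act\<^esub> (y \<oplus>\<^bsub>skew B G act\<^esub> z)"
    by (simp add: skew_simps a_assoc)
next
  interpret abelian_monoid B by (rule B)
  show "\<zero>\<^bsub>skew B G act\<^esub> \<in> carrier (skew B G act)" by (simp add: skew_simps)
  fix x y assume "x \<in> carrier (skew B G act)" "y \<in> carrier (skew B G act)"
  then show "\<zero>\<^bsub>skew B G act\<^esub> \<oplus>\<^bsub>skew B G act\<^esub> x = x"
    and "x \<oplus>\<^bsub>skew B G act\<^esub> y = y \<oplus>\<^bsub>skew B G act\<^esub> x"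
    by (simp_all add: skew_simps a_comm)
qed

lemma abelian_monoid_qver:
  assumes A: "graded_algebra A"
  shows "abelian_monoid (qver A r)"
proof (rule abelian_monoidI)
  interpret ring A by (rule graded_algebra_ring[OF A])
  note entry = qver_entry_closed[OF A]
  show "\<zero>\<^bsub>qver A r\<^esub> \<in> carrier (qver A r)"
    using zero_in_ver_shift[OF A] by (simp add: qver_simps)
  fix x y assume x: "x \<in> carrier (qver A r)" and y: "y \<in> carrier (qver A r)"
  then show "x \<oplus>\<^bsub>qver A r\<^esub> y \<in> carrier (qver A r)"
    using ver_shift_add[OF A] by (simp add: qver_simps)
  show "\<zero>\<^bsub>qver A r\<^esub> \<oplus>\<^bsub>qver A r\<^esub> x = x" "x \<oplus>\<^bsub>qver A r\<^esub> y = y \<oplus>\<^bsub>qver A r\<^esub> x"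
    using entry[OF x] entry[OF y] by (simp_all add: qver_simps a_comm fun_eq_iff)
  fix z assume z: "z \<in> carrier (qver A r)"
  show "x \<oplus>\<^bsub>qver A r\<^esub> y \<oplus>\<^bsub>qver A r\<^esub> z = x \<oplus>\<^bsub>qver A r\<^esub> (y \<oplus>\<^bsub>qver A r\<^esub> z)"
    using entry[OF x] entry[OF y] entry[OF z] by (simp add: qver_simps a_assoc fun_eq_iff)
qed

lemma skew_finsum_apply:
  assumes B: "abelian_monoid B" and "finite I" "F \<in> I \<rightarrow> carrier (skew B G act)"
  shows "finsum (skew B G act) F I g = finsum B (\<lambda>i. F i g) I"
  using assms(2,3)
  by (rule finsum_additive[OF abelian_monoid_skew[OF B] B, where e = "\<lambda>f. f g"]) (auto simp: skew_simps)

lemma grd_skew_subset_carrier: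
  "graded_algebra A \<Longrightarrow> grd (skew A G act) n \<subseteq> carrier (skew A G act)"
  using grd_subset_carrier by (fastforce simp: skew_simps)

lemma skew_hdecomp_apply:
  assumes A: "graded_algebra A" and c: "hdecomp (skew A G act) x c"
  shows "hdecomp A (x g) (\<lambda>n. c n g)"
proof -
  define N where "N = {n. c n \<noteq> \<zero>\<^bsub>skew A G act\<^esub>}"
  have "finite N" and cg: "\<And>n. c n \<in> grd (skew A G act) n" and x: "x = finsum (skew A G act) c N"
    using c unfolding hdecomp_def N_def by auto
  have "x g = finsum A (\<lambda>n. c n g) N"
    unfolding x using subsetD[OF grd_skew_subset_carrier[OF A] cg]
    by (intro skew_finsum_apply[OF graded_algebra_abelian_monoid[OF A] \<open>finite N\<close>] funcsetI)
  moreover have "\<And>n. c n g \<in> grd A n" using cg by (simp add: skew_simps)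
  moreover have "{n. c n g \<noteq> \<zero>\<^bsub>A\<^esub>} \<subseteq> N" by (auto simp: N_def skew_simps)
  ultimately show ?thesis by (intro hdecomp_iff_finsum[OF A _ \<open>finite N\<close>, THEN iffD2])
qed

lemma skew_hcomp_in_grd:
  assumes A: "graded_algebra A" and x: "x \<in> carrier (skew A G act)"
  shows "(\<lambda>g. hcomp A (x g) n) \<in> grd (skew A G act) n"
proof -
  have xA: "\<And>g. x g \<in> carrier A" and "finite {g. x g \<noteq> \<zero>\<^bsub>A\<^esub>}"
    using x by (simp_all add: skew_simps)
  moreover have "{g. hcomp A (x g) n \<noteq> \<zero>\<^bsub>A\<^esub>} \<subseteq> {g. x g \<noteq> \<zero>\<^bsub>A\<^esub>}"
    by (auto simp: hcomp_zero[OF A])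
  ultimately have "finite {g. hcomp A (x g) n \<noteq> \<zero>\<^bsub>A\<^esub>}" by (blast intro: finite_subset)
  moreover have "\<And>g. hcomp A (x g) n \<in> grd A n"
    using hcomp_hdecomp[OF graded_algebra_hdecomp_ex1[OF A xA]] unfolding hdecomp_def by blast
  ultimately show ?thesis using x by (simp add: skew_simps hcomp_zero[OF A])
qed

lemma skew_hdecomp_hcomp:
  assumes A: "graded_algebra A" and x: "x \<in> carrier (skew A G act)"
  shows "hdecomp (skew A G act) x (\<lambda>n g. hcomp A (x g) n)"
proof -
  let ?S = "skew A G act"
  define c where "c = (\<lambda>n g. hcomp A (x g) n)"
  have xA: "\<And>g. x g \<in> carrier A" and xfin: "finite {g. x g \<noteq> \<zero>\<^bsub>A\<^esub>}"
    using x by (simp_all add: skew_simps)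
  have hd: "\<And>g. hdecomp A (x g) (hcomp A (x g))"
    by (rule hcomp_hdecomp[OF graded_algebra_hdecomp_ex1[OF A xA]])
  have cg: "c n \<in> grd ?S n" for n
    unfolding c_def by (rule skew_hcomp_in_grd[OF A x])
  define N where "N = (\<Union>g\<in>{g. x g \<noteq> \<zero>\<^bsub>A\<^esub>}. {n. hcomp A (x g) n \<noteq> \<zero>\<^bsub>A\<^esub>})"
  have "finite N" unfolding N_def using xfin hd by (auto simp: hdecomp_def)
  have "{n. c n \<noteq> \<zero>\<^bsub>?S\<^esub>} \<subseteq> N"
  proof
    fix n assume "n \<in> {n. c n \<noteq> \<zero>\<^bsub>?S\<^esub>}"
    then obtain g where "hcomp A (x g) n \<noteq> \<zero>\<^bsub>A\<^esub>" by (auto simp: c_def skew_simps fun_eq_iff)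
    moreover from this have "x g \<noteq> \<zero>\<^bsub>A\<^esub>" by (auto simp: hcomp_zero[OF A])
    ultimately show "n \<in> N" by (auto simp: N_def)
  qed
  moreover have "x = finsum ?S c N"
  proof
    fix g
    have "finsum ?S c N g = finsum A (\<lambda>n. c n g) N"
      using subsetD[OF grd_skew_subset_carrier[OF A] cg]
      by (intro skew_finsum_apply[OF graded_algebra_abelian_monoid[OF A] \<open>finite N\<close>] funcsetI)
    also have "\<dots> = x g"
    proof (cases "x g = \<zero>\<^bsub>A\<^esub>")
      case True
      then show ?thesis
        by (simp add: c_def hcomp_zero[OF A] abelian_monoid.finsum_zero[OF graded_algebra_abelian_monoid[OF A]])
    next
      case False
      then have "{n. hcomp A (x g) n \<noteq> \<zero>\<^bsub>A\<^esub>} \<subseteq> N" by (auto simp: N_def)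
      moreover have "\<And>n. hcomp A (x g) n \<in> grd A n" using hd[of g] by (simp add: hdecomp_def)
      ultimately have "x g = finsum A (hcomp A (x g)) N"
        using hd[of g] hdecomp_iff_finsum[OF A _ \<open>finite N\<close>] by simp
      then show ?thesis by (simp add: c_def)
    qed
    finally show "x g = finsum ?S c N g" by simp
  qed
  ultimately have "hdecomp ?S x c"
    by (intro hdecomp_iff_superset[OF abelian_monoid_skew[OF graded_algebra_abelian_monoid[OF A]]
          grd_skew_subset_carrier[OF A] cg \<open>finite N\<close>, THEN iffD2])
  then show ?thesis by (simp add: c_def)
qed

lemma skew_hcomp:
  assumes A: "graded_algebra A" and x: "x \<in> carrier (skew A G act)"
  shows "hcomp (skew A G act) x = (\<lambda>n g. hcomp A (x g) n)"
proof (rule hcomp_eqI[OF _ skew_hdecomp_hcomp[OF A x]])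
  have "c = (\<lambda>n g. hcomp A (x g) n)" if "hdecomp (skew A G act) x c" for c
  proof (intro ext)
    fix n g
    have "x g \<in> carrier A" using x by (simp add: skew_simps)
    then show "c n g = hcomp A (x g) n"
      using hcomp_eqI[OF graded_algebra_hdecomp_ex1[OF A] skew_hdecomp_apply[OF A that]] by simp
  qed
  then show "\<exists>!c. hdecomp (skew A G act) x c" using skew_hdecomp_hcomp[OF A x] by blast
qed

lemma ver_shift_skew_iff:
  assumes A: "graded_algebra A"
  shows "x \<in> ver_shift (skew A G act) r d \<longleftrightarrow>
         x \<in> carrier (skew A G act) \<and> (\<forall>g. x g \<in> ver_shift A r d)"
proof (cases "x \<in> carrier (skew A G act)")
  case False
  then show ?thesis unfolding ver_shift_def by simp
next
  case True
  then have "\<And>g. x g \<in> carrier A" by (simp add: skew_simps)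
  moreover have "(\<forall>m. hcomp (skew A G act) x m \<noteq> \<zero>\<^bsub>skew A G act\<^esub> \<longrightarrow> int m mod int r = d mod int r)
      \<longleftrightarrow> (\<forall>g m. hcomp A (x g) m \<noteq> \<zero>\<^bsub>A\<^esub> \<longrightarrow> int m mod int r = d mod int r)"
    unfolding skew_hcomp[OF A True] by (auto simp: skew_simps fun_eq_iff)
  ultimately show ?thesis using True unfolding ver_shift_def by auto
qed

lemma skew_mult_support:
  assumes B: "ring B" and G: "group G"
    and act_zero: "\<And>g. g \<in> carrier G \<Longrightarrow> act g \<zero>\<^bsub>B\<^esub> = \<zero>\<^bsub>B\<^esub>"
    and x: "x \<in> carrier (skew B G act)"
  shows "{z. (x \<otimes>\<^bsub>skew B G act\<^esub> y) z \<noteq> \<zero>\<^bsub>B\<^esub>}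
    \<subseteq> (\<Union>g\<in>{g \<in> carrier G. x g \<noteq> \<zero>\<^bsub>B\<^esub>}. (\<lambda>h. g \<otimes>\<^bsub>G\<^esub> h) ` {h. y h \<noteq> \<zero>\<^bsub>B\<^esub>})"
proof
  interpret B: ring B by (rule B)
  interpret G: group G by (rule G)
  define t where "t = (\<lambda>z g. x g \<otimes>\<^bsub>B\<^esub> act g (y (inv\<^bsub>G\<^esub> g \<otimes>\<^bsub>G\<^esub> z)))"
  fix z assume "z \<in> {z. (x \<otimes>\<^bsub>skew B G act\<^esub> y) z \<noteq> \<zero>\<^bsub>B\<^esub>}"
  then have zG: "z \<in> carrier G" and nz: "finsum B (t z) {g \<in> carrier G. x g \<noteq> \<zero>\<^bsub>B\<^esub>} \<noteq> \<zero>\<^bsub>B\<^esub>"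
    by (simp_all add: skew_simps t_def split: if_splits)
  have "\<exists>g\<in>{g \<in> carrier G. x g \<noteq> \<zero>\<^bsub>B\<^esub>}. t z g \<noteq> \<zero>\<^bsub>B\<^esub>"
  proof (rule ccontr)
    assume "\<not> ?thesis"
    then have "finsum B (t z) {g \<in> carrier G. x g \<noteq> \<zero>\<^bsub>B\<^esub>} = finsum B (\<lambda>_. \<zero>\<^bsub>B\<^esub>) {g \<in> carrier G. x g \<noteq> \<zero>\<^bsub>B\<^esub>}"
      by (intro B.finsum_cong') auto
    with nz show False by simp
  qed
  then obtain g where gG: "g \<in> carrier G" and "x g \<noteq> \<zero>\<^bsub>B\<^esub>" and "t z g \<noteq> \<zero>\<^bsub>B\<^esub>" by blast
  moreover have "x g \<in> carrier B" using x by (simp add: skew_simps)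
  ultimately have "inv\<^bsub>G\<^esub> g \<otimes>\<^bsub>G\<^esub> z \<in> {h. y h \<noteq> \<zero>\<^bsub>B\<^esub>}"
    using act_zero by (auto simp: t_def)
  moreover have "z = g \<otimes>\<^bsub>G\<^esub> (inv\<^bsub>G\<^esub> g \<otimes>\<^bsub>G\<^esub> z)"
    using gG zG by (simp add: G.m_assoc[symmetric])
  ultimately show "z \<in> (\<Union>g\<in>{g \<in> carrier G. x g \<noteq> \<zero>\<^bsub>B\<^esub>}. (\<lambda>h. g \<otimes>\<^bsub>G\<^esub> h) ` {h. y h \<noteq> \<zero>\<^bsub>B\<^esub>})"
    using gG \<open>x g \<noteq> \<zero>\<^bsub>B\<^esub>\<close> by blast
qed

lemma skew_mult_closed:
  assumes B: "ring B" and G: "group G"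
    and act: "\<And>g b. g \<in> carrier G \<Longrightarrow> b \<in> carrier B \<Longrightarrow> act g b \<in> carrier B"
    and act_zero: "\<And>g. g \<in> carrier G \<Longrightarrow> act g \<zero>\<^bsub>B\<^esub> = \<zero>\<^bsub>B\<^esub>"
    and x: "x \<in> carrier (skew B G act)" and y: "y \<in> carrier (skew B G act)"
  shows "x \<otimes>\<^bsub>skew B G act\<^esub> y \<in> carrier (skew B G act)"
proof -
  interpret B: ring B by (rule B)
  have "finite {g \<in> carrier G. x g \<noteq> \<zero>\<^bsub>B\<^esub>}" "finite {h. y h \<noteq> \<zero>\<^bsub>B\<^esub>}"
    using x y by (simp_all add: skew_simps)
  then have "finite {z. (x \<otimes>\<^bsub>skew B G act\<^esub> y) z \<noteq> \<zero>\<^bsub>B\<^esub>}"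
    by (intro finite_subset[OF skew_mult_support[OF B G act_zero x]]) auto
  moreover have "(x \<otimes>\<^bsub>skew B G act\<^esub> y) z \<in> carrier B" for z
    using x y act by (simp add: skew_simps Pi_def)
  ultimately show ?thesis by (simp add: skew_simps)
qed

lemma qver_mult_closed:
  assumes A: "graded_algebra A" and M: "M \<in> carrier (qver A r)" and N: "N \<in> carrier (qver A r)"
  shows "M \<otimes>\<^bsub>qver A r\<^esub> N \<in> carrier (qver A r)"
proof -
  have "finsum A (\<lambda>k. M k j \<otimes>\<^bsub>A\<^esub> N i k) {..<r} \<in> ver_shift A r (int j - int i)"
    if "i < r" "j < r" for i j
  proof (rule ver_shift_finsum[OF A])
    fix k assume "k \<in> {..<r}"
    then have "M k j \<otimes>\<^bsub>A\<^esub> N i k \<in> ver_shift A r ((int j - int k) + (int k - int i))"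
      using M N that by (intro ver_shift_mult[OF A]) (simp_all add: qver_simps)
    then show "M k j \<otimes>\<^bsub>A\<^esub> N i k \<in> ver_shift A r (int j - int i)" by simp
  qed simp
  then show ?thesis by (simp add: qver_simps)
qed

lemma qver_entrywise_closed:
  assumes A: "graded_algebra A" and \<phi>: "graded_hom A A \<phi>" and M: "M \<in> carrier (qver A r)"
  shows "(\<lambda>i j. \<phi> (M i j)) \<in> carrier (qver A r)"
  using M ver_shift_graded_endo[OF A \<phi>] graded_hom_zero[OF \<phi> graded_algebra_ring[OF A] graded_algebra_ring[OF A]]
  by (simp add: qver_simps)

section \<open>Exchanging the group index with the matrix indices\<close>

definition swap_skew_qver :: "('g \<Rightarrow> nat \<Rightarrow> nat \<Rightarrow> 'a) \<Rightarrow> nat \<Rightarrow> nat \<Rightarrow> 'g \<Rightarrow> 'a" where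
  "swap_skew_qver f = (\<lambda>i j g. f g i j)"

lemma swap_skew_qver_image_eq:
  assumes "\<And>f. swap_skew_qver f \<in> T \<longleftrightarrow> f \<in> S"
  shows "swap_skew_qver ` S = T"
proof (intro equalityI subsetI)
  fix M assume "M \<in> T"
  then have "(\<lambda>g i j. M i j g) \<in> S" using assms[of "\<lambda>g i j. M i j g"] by (simp add: swap_skew_qver_def)
  moreover have "M = swap_skew_qver (\<lambda>g i j. M i j g)" by (simp add: swap_skew_qver_def)
  ultimately show "M \<in> swap_skew_qver ` S" by blast
qed (use assms in blast)

lemma inj_swap_skew_qver: "inj swap_skew_qver"
  by (rule injI) (simp add: swap_skew_qver_def fun_eq_iff)

lemma finite_support_matrix:
  fixes f :: "'g \<Rightarrow> nat \<Rightarrow> nat \<Rightarrow> 'a"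
  assumes "\<And>g i j. \<not> (i < r \<and> j < r) \<Longrightarrow> f g i j = z"
  shows "finite {g. f g \<noteq> (\<lambda>i j. z)} \<longleftrightarrow> (\<forall>i j. finite {g. f g i j \<noteq> z})"
proof
  assume "finite {g. f g \<noteq> (\<lambda>i j. z)}"
  moreover have "{g. f g i j \<noteq> z} \<subseteq> {g. f g \<noteq> (\<lambda>i j. z)}" for i j by auto
  ultimately show "\<forall>i j. finite {g. f g i j \<noteq> z}" by (blast intro: finite_subset)
next
  assume fin: "\<forall>i j. finite {g. f g i j \<noteq> z}"
  have "{g. f g \<noteq> (\<lambda>i j. z)} \<subseteq> (\<Union>i<r. \<Union>j<r. {g. f g i j \<noteq> z})"
    using assms by (force simp: fun_eq_iff)
  moreover have "finite (\<Union>i<r. \<Union>j<r. {g. f g i j \<noteq> z})" using fin by simp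
  ultimately show "finite {g. f g \<noteq> (\<lambda>i j. z)}" by (rule finite_subset)
qed

lemma grdZ_skew_iff:
  "x \<in> grdZ (skew A G act) m \<longleftrightarrow>
     (\<forall>g. x g \<in> grdZ A m) \<and> (\<forall>g. g \<notin> carrier G \<longrightarrow> x g = \<zero>\<^bsub>A\<^esub>) \<and> finite {g. x g \<noteq> \<zero>\<^bsub>A\<^esub>}"
  by (auto simp: grdZ_def skew_simps fun_eq_iff)

context
  fixes A :: "('k::field, 'a) gralg" and G :: "'g monoid" and act :: "'g \<Rightarrow> 'a \<Rightarrow> 'a" and r :: nat
  assumes graded: "graded_algebra A" and group: "group G"
    and act_aut: "\<And>g. g \<in> carrier G \<Longrightarrow> act g \<in> carrier (GrAut A)"
begin

abbreviation skew_qver where "skew_qver \<equiv> skew (qver A r) G (\<lambda>g M i j. act g (M i j))"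

abbreviation qver_skew where "qver_skew \<equiv> qver (skew A G act) r"

interpretation A: ring A by (rule graded_algebra_ring[OF graded])

lemma carrier_skew_qver_iff:
  "f \<in> carrier skew_qver \<longleftrightarrow>
     (\<forall>g i j. (i < r \<and> j < r \<longrightarrow> f g i j \<in> ver_shift A r (int j - int i))
            \<and> (\<not> (i < r \<and> j < r) \<longrightarrow> f g i j = \<zero>\<^bsub>A\<^esub>)
            \<and> (g \<notin> carrier G \<longrightarrow> f g i j = \<zero>\<^bsub>A\<^esub>))
     \<and> (\<forall>i j. finite {g. f g i j \<noteq> \<zero>\<^bsub>A\<^esub>})"
proof -
  have "f \<in> carrier skew_qver \<longleftrightarrow>
     (\<forall>g i j. (i < r \<and> j < r \<longrightarrow> f g i j \<in> ver_shift A r (int j - int i))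
            \<and> (\<not> (i < r \<and> j < r) \<longrightarrow> f g i j = \<zero>\<^bsub>A\<^esub>)
            \<and> (g \<notin> carrier G \<longrightarrow> f g i j = \<zero>\<^bsub>A\<^esub>))
     \<and> finite {g. f g \<noteq> (\<lambda>i j. \<zero>\<^bsub>A\<^esub>)}"
    by (auto simp: skew_simps qver_simps fun_eq_iff)
  then show ?thesis using finite_support_matrix[of r f] by blast
qed

lemma carrier_qver_skew_iff:
  "M \<in> carrier qver_skew \<longleftrightarrow>
     (\<forall>g i j. (i < r \<and> j < r \<longrightarrow> M i j g \<in> ver_shift A r (int j - int i))
            \<and> (\<not> (i < r \<and> j < r) \<longrightarrow> M i j g = \<zero>\<^bsub>A\<^esub>)
            \<and> (g \<notin> carrier G \<longrightarrow> M i j g = \<zero>\<^bsub>A\<^esub>))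
     \<and> (\<forall>i j. finite {g. M i j g \<noteq> \<zero>\<^bsub>A\<^esub>})"
  (is "_ \<longleftrightarrow> ?rhs")
proof -
  have "M \<in> carrier qver_skew \<longleftrightarrow>
      (\<forall>i j. (i < r \<and> j < r \<longrightarrow> M i j \<in> carrier (skew A G act) \<and> (\<forall>g. M i j g \<in> ver_shift A r (int j - int i)))
           \<and> (\<not> (i < r \<and> j < r) \<longrightarrow> M i j = (\<lambda>g. \<zero>\<^bsub>A\<^esub>)))"
    (is "_ \<longleftrightarrow> ?mid")
    by (simp add: qver_simps(1) ver_shift_skew_iff[OF graded] skew_simps(3))
  also have "?mid \<longleftrightarrow> ?rhs"
  proof
    assume H: ?mid
    have entry: "(i < r \<and> j < r \<longrightarrow> M i j g \<in> ver_shift A r (int j - int i))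
        \<and> (\<not> (i < r \<and> j < r) \<longrightarrow> M i j g = \<zero>\<^bsub>A\<^esub>) \<and> (g \<notin> carrier G \<longrightarrow> M i j g = \<zero>\<^bsub>A\<^esub>)
        \<and> finite {g. M i j g \<noteq> \<zero>\<^bsub>A\<^esub>}" for g i j
    proof (cases "i < r \<and> j < r")
      case True
      with H show ?thesis by (simp add: skew_simps)
    next
      case False
      with H have "M i j = (\<lambda>g. \<zero>\<^bsub>A\<^esub>)" by simp
      with False show ?thesis by auto
    qed
    show ?rhs using entry by simp
  next
    assume H: ?rhs
    then have "M i j g \<in> carrier A" if "i < r" "j < r" for i j g
      using that by (intro ver_shift_carrier[of _ A r "int j - int i"]) simp
    with H show ?mid by (auto simp: skew_simps fun_eq_iff)
  qed
  finally show ?thesis .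
qed

lemma swap_skew_qver_carrier_iff:
  "swap_skew_qver f \<in> carrier qver_skew \<longleftrightarrow> f \<in> carrier skew_qver"
  by (simp only: carrier_skew_qver_iff carrier_qver_skew_iff swap_skew_qver_def)

lemma grd_skew_qver_iff:
  "f \<in> grd skew_qver n \<longleftrightarrow>
     (\<forall>g i j. (i < r \<and> j < r \<longrightarrow> f g i j \<in> grdZ A (int r * int n + int j - int i))
            \<and> (\<not> (i < r \<and> j < r) \<longrightarrow> f g i j = \<zero>\<^bsub>A\<^esub>)
            \<and> (g \<notin> carrier G \<longrightarrow> f g i j = \<zero>\<^bsub>A\<^esub>))
     \<and> (\<forall>i j. finite {g. f g i j \<noteq> \<zero>\<^bsub>A\<^esub>})"
proof -
  have "f \<in> grd skew_qver n \<longleftrightarrow>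
     (\<forall>g i j. (i < r \<and> j < r \<longrightarrow> f g i j \<in> grdZ A (int r * int n + int j - int i))
            \<and> (\<not> (i < r \<and> j < r) \<longrightarrow> f g i j = \<zero>\<^bsub>A\<^esub>)
            \<and> (g \<notin> carrier G \<longrightarrow> f g i j = \<zero>\<^bsub>A\<^esub>))
     \<and> finite {g. f g \<noteq> (\<lambda>i j. \<zero>\<^bsub>A\<^esub>)}"
    by (auto simp: skew_simps qver_simps fun_eq_iff)
  then show ?thesis using finite_support_matrix[of r f] by blast
qed

lemma grd_qver_skew_iff:
  "M \<in> grd qver_skew n \<longleftrightarrow>
     (\<forall>g i j. (i < r \<and> j < r \<longrightarrow> M i j g \<in> grdZ A (int r * int n + int j - int i))
            \<and> (\<not> (i < r \<and> j < r) \<longrightarrow> M i j g = \<zero>\<^bsub>A\<^esub>)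
            \<and> (g \<notin> carrier G \<longrightarrow> M i j g = \<zero>\<^bsub>A\<^esub>))
     \<and> (\<forall>i j. finite {g. M i j g \<noteq> \<zero>\<^bsub>A\<^esub>})"
  (is "_ \<longleftrightarrow> ?rhs")
proof -
  have "M \<in> grd qver_skew n \<longleftrightarrow>
      (\<forall>i j. (i < r \<and> j < r \<longrightarrow> M i j \<in> grdZ (skew A G act) (int r * int n + int j - int i))
           \<and> (\<not> (i < r \<and> j < r) \<longrightarrow> M i j = (\<lambda>g. \<zero>\<^bsub>A\<^esub>)))"
    (is "_ \<longleftrightarrow> ?mid")
    by (simp add: qver_simps(7) skew_simps(3))
  also have "?mid \<longleftrightarrow> ?rhs"
  proof
    assume H: ?mid
    have entry: "(i < r \<and> j < r \<longrightarrow> M i j g \<in> grdZ A (int r * int n + int j - int i))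
        \<and> (\<not> (i < r \<and> j < r) \<longrightarrow> M i j g = \<zero>\<^bsub>A\<^esub>) \<and> (g \<notin> carrier G \<longrightarrow> M i j g = \<zero>\<^bsub>A\<^esub>)
        \<and> finite {g. M i j g \<noteq> \<zero>\<^bsub>A\<^esub>}" for g i j
    proof (cases "i < r \<and> j < r")
      case True
      with H show ?thesis by (simp add: grdZ_skew_iff)
    next
      case False
      with H have "M i j = (\<lambda>g. \<zero>\<^bsub>A\<^esub>)" by simp
      with False show ?thesis by auto
    qed
    show ?rhs using entry by simp
  next
    assume H: ?rhs
    then show ?mid by (auto simp: grdZ_skew_iff fun_eq_iff)
  qed
  finally show ?thesis .
qed

lemma swap_skew_qver_grd_iff:
  "swap_skew_qver f \<in> grd qver_skew n \<longleftrightarrow> f \<in> grd skew_qver n"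
  by (simp only: grd_skew_qver_iff grd_qver_skew_iff swap_skew_qver_def)

lemma act_hom: "g \<in> carrier G \<Longrightarrow> graded_hom A A (act g)"
  using graded_isoD(1)[OF GrAut_carrier_iso[OF act_aut]] .

lemma act_closed: "g \<in> carrier G \<Longrightarrow> a \<in> carrier A \<Longrightarrow> act g a \<in> carrier A"
  using graded_hom_closed[OF act_hom] .

lemma act_zero: "g \<in> carrier G \<Longrightarrow> act g \<zero>\<^bsub>A\<^esub> = \<zero>\<^bsub>A\<^esub>"
  using graded_hom_zero[OF act_hom graded_algebra_ring[OF graded] graded_algebra_ring[OF graded]] .

lemma qver_skew_entry_closed:
  assumes "M \<in> carrier qver_skew"
  shows "M i j \<in> carrier (skew A G act)"
proof -
  have "M i j g \<in> carrier A" for g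
  proof (cases "i < r \<and> j < r")
    case True
    then show ?thesis using assms by (intro ver_shift_carrier[of _ A r "int j - int i"]) (simp add: carrier_qver_skew_iff)
  next
    case False
    then show ?thesis using assms ring.ring_simprules(2)[OF graded_algebra_ring[OF graded]]
      by (simp add: carrier_qver_skew_iff)
  qed
  then show ?thesis using assms by (simp add: carrier_qver_skew_iff skew_simps)
qed

lemma skew_qver_mult_apply:
  assumes f: "f \<in> carrier skew_qver" and h: "h \<in> carrier skew_qver"
  shows "(f \<otimes>\<^bsub>skew_qver\<^esub> h) x i j =
    (if x \<in> carrier G \<and> i < r \<and> j < r then
       finsum A (\<lambda>g. finsum A (\<lambda>k. f g k j \<otimes>\<^bsub>A\<^esub> act g (h (inv\<^bsub>G\<^esub> g \<otimes>\<^bsub>G\<^esub> x) i k)) {..<r})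
         {g \<in> carrier G. f g \<noteq> (\<lambda>i j. \<zero>\<^bsub>A\<^esub>)}
     else \<zero>\<^bsub>A\<^esub>)"
proof (cases "x \<in> carrier G")
  case False
  then show ?thesis by (simp add: skew_simps qver_simps(4))
next
  case True
  define S where "S = {g \<in> carrier G. f g \<noteq> (\<lambda>i j. \<zero>\<^bsub>A\<^esub>)}"
  define F where "F = (\<lambda>g. f g \<otimes>\<^bsub>qver A r\<^esub> (\<lambda>i j. act g (h (inv\<^bsub>G\<^esub> g \<otimes>\<^bsub>G\<^esub> x) i j)))"
  have fB: "\<And>g. f g \<in> carrier (qver A r)" and hB: "\<And>g. h g \<in> carrier (qver A r)"
    using f h by (simp_all add: skew_simps)
  have "finite S" using f by (simp add: skew_simps qver_simps(4) S_def)
  have FB: "F g \<in> carrier (qver A r)" if "g \<in> S" for g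
  proof -
    have "g \<in> carrier G" using that by (simp add: S_def)
    then show ?thesis
      unfolding F_def by (intro qver_mult_closed[OF graded fB] qver_entrywise_closed[OF graded act_hom hB])
  qed
  have "(f \<otimes>\<^bsub>skew_qver\<^esub> h) x i j = finsum (qver A r) F S i j"
    using True by (simp add: skew_simps qver_simps(4) S_def F_def)
  also have "\<dots> = finsum A (\<lambda>g. F g i j) S"
    using \<open>finite S\<close> FB
    by (intro finsum_additive[OF abelian_monoid_qver[OF graded] graded_algebra_abelian_monoid[OF graded],
          where e = "\<lambda>M. M i j"] funcsetI qver_entry_closed[OF graded]) (simp_all add: qver_simps)
  also have "\<dots> = (if i < r \<and> j < r then
       finsum A (\<lambda>g. finsum A (\<lambda>k. f g k j \<otimes>\<^bsub>A\<^esub> act g (h (inv\<^bsub>G\<^esub> g \<otimes>\<^bsub>G\<^esub> x) i k)) {..<r}) S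
     else \<zero>\<^bsub>A\<^esub>)"
    by (cases "i < r"; cases "j < r"; simp add: F_def qver_simps(2))
  finally show ?thesis using True by (simp add: S_def)
qed

lemma skew_mult_swap_skew_qver_apply:
  assumes f: "f \<in> carrier skew_qver" and h: "h \<in> carrier skew_qver"
  shows "(swap_skew_qver f k j \<otimes>\<^bsub>skew A G act\<^esub> swap_skew_qver h i k) x =
    (if x \<in> carrier G then
       finsum A (\<lambda>g. f g k j \<otimes>\<^bsub>A\<^esub> act g (h (inv\<^bsub>G\<^esub> g \<otimes>\<^bsub>G\<^esub> x) i k))
         {g \<in> carrier G. f g \<noteq> (\<lambda>i j. \<zero>\<^bsub>A\<^esub>)}
     else \<zero>\<^bsub>A\<^esub>)"
proof (cases "x \<in> carrier G")
  case False
  then show ?thesis by (simp add: skew_simps)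
next
  case True
  define S where "S = {g \<in> carrier G. f g \<noteq> (\<lambda>i j. \<zero>\<^bsub>A\<^esub>)}"
  define T where "T = (\<lambda>g. f g k j \<otimes>\<^bsub>A\<^esub> act g (h (inv\<^bsub>G\<^esub> g \<otimes>\<^bsub>G\<^esub> x) i k))"
  have fB: "\<And>g. f g \<in> carrier (qver A r)" and hB: "\<And>g. h g \<in> carrier (qver A r)"
    using f h by (simp_all add: skew_simps)
  have "finite S" using f by (simp add: skew_simps qver_simps(4) S_def)
  have "(swap_skew_qver f k j \<otimes>\<^bsub>skew A G act\<^esub> swap_skew_qver h i k) x
      = finsum A T {g \<in> carrier G. f g k j \<noteq> \<zero>\<^bsub>A\<^esub>}"
    using True by (simp add: skew_simps swap_skew_qver_def T_def)
  also have "\<dots> = finsum A T S"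
  proof (rule A.add.finprod_mono_neutral_cong_left[OF \<open>finite S\<close>])
    show "{g \<in> carrier G. f g k j \<noteq> \<zero>\<^bsub>A\<^esub>} \<subseteq> S" by (auto simp: S_def)
    show "T \<in> S \<rightarrow> carrier A"
      using qver_entry_closed[OF graded fB] qver_entry_closed[OF graded hB] act_closed
      by (simp add: S_def T_def)
    fix g assume "g \<in> S - {g \<in> carrier G. f g k j \<noteq> \<zero>\<^bsub>A\<^esub>}"
    then show "T g = \<zero>\<^bsub>A\<^esub>"
      using qver_entry_closed[OF graded hB] act_closed by (simp add: S_def T_def)
  qed simp
  finally show ?thesis using True by (simp add: S_def T_def)
qed

lemma qver_skew_mult_apply:
  assumes f: "f \<in> carrier skew_qver" and h: "h \<in> carrier skew_qver"
  shows "(swap_skew_qver f \<otimes>\<^bsub>qver_skew\<^esub> swap_skew_qver h) i j x =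
    (if x \<in> carrier G \<and> i < r \<and> j < r then
       finsum A (\<lambda>k. finsum A (\<lambda>g. f g k j \<otimes>\<^bsub>A\<^esub> act g (h (inv\<^bsub>G\<^esub> g \<otimes>\<^bsub>G\<^esub> x) i k))
         {g \<in> carrier G. f g \<noteq> (\<lambda>i j. \<zero>\<^bsub>A\<^esub>)}) {..<r}
     else \<zero>\<^bsub>A\<^esub>)"
proof (cases "i < r \<and> j < r")
  case False
  then show ?thesis by (cases "i < r"; cases "j < r"; simp add: qver_simps(2) skew_simps(3))
next
  case True
  let ?C = "skew A G act"
  have fR: "swap_skew_qver f \<in> carrier qver_skew" and hR: "swap_skew_qver h \<in> carrier qver_skew"
    using f h swap_skew_qver_carrier_iff by blast+
  have "swap_skew_qver f k j \<otimes>\<^bsub>?C\<^esub> swap_skew_qver h i k \<in> carrier ?C" for k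
    using act_closed act_zero
    by (intro skew_mult_closed[OF A.ring_axioms group _ _ qver_skew_entry_closed[OF fR]
          qver_skew_entry_closed[OF hR]])
  then have "finsum ?C (\<lambda>k. swap_skew_qver f k j \<otimes>\<^bsub>?C\<^esub> swap_skew_qver h i k) {..<r} x
      = finsum A (\<lambda>k. (swap_skew_qver f k j \<otimes>\<^bsub>?C\<^esub> swap_skew_qver h i k) x) {..<r}"
    by (intro skew_finsum_apply[OF graded_algebra_abelian_monoid[OF graded]] funcsetI) simp_all
  then show ?thesis
    using True by (simp add: qver_simps(2) skew_mult_swap_skew_qver_apply[OF f h])
qed

lemma swap_skew_qver_mult:
  assumes f: "f \<in> carrier skew_qver" and h: "h \<in> carrier skew_qver"
  shows "swap_skew_qver (f \<otimes>\<^bsub>skew_qver\<^esub> h) = swap_skew_qver f \<otimes>\<^bsub>qver_skew\<^esub> swap_skew_qver h"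
proof (intro ext)
  fix i j x
  define S where "S = {g \<in> carrier G. f g \<noteq> (\<lambda>i j. \<zero>\<^bsub>A\<^esub>)}"
  have "finite S" using f by (simp add: skew_simps qver_simps(4) S_def)
  have fB: "\<And>g. f g \<in> carrier (qver A r)" and hB: "\<And>g. h g \<in> carrier (qver A r)"
    using f h by (simp_all add: skew_simps)
  have "f g k j \<otimes>\<^bsub>A\<^esub> act g (h (inv\<^bsub>G\<^esub> g \<otimes>\<^bsub>G\<^esub> x) i k) \<in> carrier A" if "g \<in> S" for g k
    using that qver_entry_closed[OF graded fB] qver_entry_closed[OF graded hB] act_closed
    by (simp add: S_def)
  then have "finsum A (\<lambda>g. finsum A (\<lambda>k. f g k j \<otimes>\<^bsub>A\<^esub> act g (h (inv\<^bsub>G\<^esub> g \<otimes>\<^bsub>G\<^esub> x) i k)) {..<r}) S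
      = finsum A (\<lambda>k. finsum A (\<lambda>g. f g k j \<otimes>\<^bsub>A\<^esub> act g (h (inv\<^bsub>G\<^esub> g \<otimes>\<^bsub>G\<^esub> x) i k)) S) {..<r}"
    by (intro A.finsum_swap \<open>finite S\<close> finite_lessThan)
  then show "swap_skew_qver (f \<otimes>\<^bsub>skew_qver\<^esub> h) i j x = (swap_skew_qver f \<otimes>\<^bsub>qver_skew\<^esub> swap_skew_qver h) i j x"
    unfolding qver_skew_mult_apply[OF f h]
    by (simp add: swap_skew_qver_def skew_qver_mult_apply[OF f h] S_def)
qed

theorem graded_iso_swap_skew_qver: "graded_iso skew_qver qver_skew swap_skew_qver"
proof -
  have "graded_hom skew_qver qver_skew swap_skew_qver"
    unfolding graded_hom_def
  proof (intro conjI ballI allI)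
    show "swap_skew_qver \<in> carrier skew_qver \<rightarrow> carrier qver_skew"
      using swap_skew_qver_carrier_iff by blast
    fix f h assume "f \<in> carrier skew_qver" "h \<in> carrier skew_qver"
    then show "swap_skew_qver (f \<otimes>\<^bsub>skew_qver\<^esub> h) = swap_skew_qver f \<otimes>\<^bsub>qver_skew\<^esub> swap_skew_qver h"
      by (rule swap_skew_qver_mult)
    show "swap_skew_qver (f \<oplus>\<^bsub>skew_qver\<^esub> h) = swap_skew_qver f \<oplus>\<^bsub>qver_skew\<^esub> swap_skew_qver h"
      by (simp add: swap_skew_qver_def skew_simps qver_simps)
  next
    show "swap_skew_qver \<one>\<^bsub>skew_qver\<^esub> = \<one>\<^bsub>qver_skew\<^esub>"
      by (simp add: swap_skew_qver_def skew_simps qver_simps fun_eq_iff)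
  next
    fix c f
    show "swap_skew_qver (sm skew_qver c f) = sm qver_skew c (swap_skew_qver f)"
      by (simp add: swap_skew_qver_def skew_simps qver_simps)
  next
    fix n
    show "swap_skew_qver ` grd skew_qver n \<subseteq> grd qver_skew n"
      using swap_skew_qver_grd_iff by blast
  qed
  moreover have "bij_betw swap_skew_qver (carrier skew_qver) (carrier qver_skew)"
    unfolding bij_betw_def
    using swap_skew_qver_image_eq[OF swap_skew_qver_carrier_iff] inj_on_subset[OF inj_swap_skew_qver subset_UNIV]
    by blast
  moreover have "swap_skew_qver ` grd skew_qver n = grd qver_skew n" for n
    using swap_skew_qver_image_eq[OF swap_skew_qver_grd_iff] .
  ultimately show ?thesis unfolding graded_iso_def by blast
qed

end

theorem lemma2p29:
  fixes A :: "('k::field, 'a) gralg" and H :: "('a \<Rightarrow> 'a) set" and r :: nat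
  assumes "alg_closed TYPE('k)"
    and "graded_algebra A"
    and "subgroup H (GrAut A)"
    and "r \<ge> 1"
  shows "\<exists>\<phi>. graded_iso
            (skew (qver A r) ((GrAut A)\<lparr>carrier := H\<rparr>) (\<lambda>g M i j. g (M i j)))
            (qver (skew A ((GrAut A)\<lparr>carrier := H\<rparr>) (\<lambda>g a. g a)) r)
            \<phi>"
proof -
  have "group ((GrAut A)\<lparr>carrier := H\<rparr>)"
    using subgroup.subgroup_is_group[OF assms(3) group_GrAut[OF assms(2)]] .
  moreover have "\<And>g. g \<in> carrier ((GrAut A)\<lparr>carrier := H\<rparr>) \<Longrightarrow> g \<in> carrier (GrAut A)"
    using subgroup.subset[OF assms(3)] by auto
  ultimately show ?thesis
    using graded_iso_swap_skew_qver[OF assms(2), where act = "\<lambda>g a. g a"] by blast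
qed

end
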